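(* Let $N\ge 0$ be an integer, let $h>0$, and let $T^{(i-1)},T^{(i)},T^{(i+1)}$ be three consecutive closed intervals of length $h$ on the real line (so $T^{(i-1)}=[x_{i-1/2}-h,x_{i-1/2}]$, $T^{(i)}=[x_{i-1/2},x_{i+1/2}]$, $T^{(i+1)}=[x_{i+1/2},x_{i+1/2}+h]$ with $x_{i+1/2}-x_{i-1/2}=h$), and let $\mathcal{S}^{(i)}=T^{(i-1)}\cup T^{(i)}\cup T^{(i+1)}$. For each $j\in\{i-1,i,i+1\}$ let $v^{(j)}$ be a given real polynomial of degree at most $N$ on $T^{(j)}$. Then there exists exactly one real polynomial $w$ of degree at most $M=3N+2$ on $\mathcal{S}^{(i)}$ such that $$\int_{T^{(j)}} w(x)\,\varphi(x)\,dx=\int_{T^{(j)}} v^{(j)}(x)\,\varphi(x)\,dx\qquad\text{for every polynomial }\varphi\text{ of degree at most }N\text{ and every } j\in\{i-1,i,i+1\}.$$ Equivalently, in matrix form: let $P_k$ denote the Legendre polynomial of degree $k$ on $[-1,1]$, set $a_{k,\ell}=\int_{-1}^1 P_k(s)P_\ell(s+2)\,ds$, $b_{k,\ell}=(-1)^{k+\ell}a_{k,\ell}$ and $c_{k,\ell}=\tfrac12(a_{k,\ell}+b_{k,\ell})$. Then the $(2N+2)\times(2N+2)$ matrix $B$ whose first $N+1$ rows are $(a_{k,N+1},\dots,a_{k,3N+2})$, $k=0,\dots,N$, and whose last $N+1$ rows are $(c_{k,N+1},\dots,c_{k,3N+2})$, $k=0,\dots,N$, is invertible, and consequently the reconstruction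 problem above has a unique solution.
   Context: This is the "reconstruction" (inverse $L^2$-projection) step of $P_NP_M$ schemes on the three-cell central stencil: the reconstructed polynomial $w$ of degree $M$ on the whole stencil is required to have the same moments as the given piecewise polynomial data of degree $N$ on each of the three cells, tested against all polynomials of degree at most $N$. The Legendre polynomials $P_k$ are the standard ones on $[-1,1]$ (orthogonal in $L^2(-1,1)$, $\int_{-1}^1 P_k^2=2/(2k+1)$). *)

theory Defs
  imports "HOL-Analysis.Analysis" "HOL-Computational_Algebra.Polynomial"
    "Jordan_Normal_Form.Matrix"
begin

definition legendre :: "nat \<Rightarrow> real poly" where
  "legendre n = Polynomial.smult (1 / (2 ^ n * fact n)) ((pderiv ^^ n) ([:-1, 0, 1:] ^ n))"

definition leg_a :: "nat \<Rightarrow> nat \<Rightarrow> real" where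
  "leg_a k l = integral {-1..1} (\<lambda>s. poly (legendre k) s * poly (legendre l) (s + 2))"

definition leg_b :: "nat \<Rightarrow> nat \<Rightarrow> real" where
  "leg_b k l = (-1) ^ (k + l) * leg_a k l"

definition leg_c :: "nat \<Rightarrow> nat \<Rightarrow> real" where
  "leg_c k l = (leg_a k l + leg_b k l) / 2"

definition recon_matrix :: "nat \<Rightarrow> real mat" where
  "recon_matrix N = mat (2*N+2) (2*N+2) (\<lambda>(r, col).
      if r \<le> N then leg_a r (N + 1 + col) else leg_c (r - (N + 1)) (N + 1 + col))"

(* the j-th cell (j = 0,1,2 for T^(i-1), T^(i), T^(i+1)) with left endpoint x_{i-1/2} = a *)
definition cell :: "real \<Rightarrow> real \<Rightarrow> nat \<Rightarrow> real set" where
  "cell a h j = {a + (real j - 1) * h .. a + real j * h}"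

end

theory Submission
  imports Defs "Jordan_Normal_Form.Determinant"
begin

(*
  Uniqueness comes from a root count. Suppose deg w \<le> 3N+2 and all moments of w of order
  at most N vanish on the three cells. Let W be an (N+1)-fold antiderivative of w vanishing to
  order N+1 at the left end of the stencil. Taylor's formula with integral remainder shows, cell by
  cell, that W then vanishes to order N+1 at every cell boundary, so W has 4(N+1) roots counted
  with multiplicity but degree at most 4N+3; hence W = 0 and w = 0. The moment map from
  polynomials of degree at most 3N+2 to R^(3N+3) is thus injective, hence bijective.

  For B: if B \<beta> = 0, then w = \<Sum>c \<beta>_c P_(N+1+c) is orthogonal on [-1,1] to all polynomials of
  degree at most N. The first N+1 rows of B say that its moments against P_k(x - 2) on [1,3]
  vanish; since b = 2c - a and P_k has parity (-1)^k, the last N+1 rows say the same for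
  P_k(x + 2) on [-3,-1]. So w = 0 by the root count, and \<beta> = 0 as the P_(N+1+c) have distinct
  degrees.
*)

lemma integrable_poly_mult [simp]:
  "(\<lambda>x. poly p x * poly q x :: real) integrable_on {a..b}"
  by (intro integrable_continuous_interval continuous_intros)

lemma integral_poly_pderiv:
  fixes p :: "real poly"
  assumes "a \<le> b"
  shows "integral {a..b} (poly (pderiv p)) = poly p b - poly p a"
proof (rule integral_unique, rule fundamental_theorem_of_calculus[OF assms])
  fix x
  show "(poly p has_vector_derivative poly (pderiv p) x) (at x within {a..b})"
    by (simp add: has_real_derivative_iff_has_vector_derivative[symmetric] has_field_derivative_at_within)
qed

lemma integral_poly_by_parts:
  fixes f g :: "real poly"
  assumes "a \<le> b"
  shows "integral {a..b} (\<lambda>x. poly (pderiv f) x * poly g x) =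
    poly f b * poly g b - poly f a * poly g a - integral {a..b} (\<lambda>x. poly f x * poly (pderiv g) x)"
proof -
  have "(\<lambda>x. poly (pderiv f) x * poly g x + poly f x * poly (pderiv g) x) = poly (pderiv (f * g))"
    by (auto simp: pderiv_mult)
  then have "integral {a..b} (\<lambda>x. poly (pderiv f) x * poly g x + poly f x * poly (pderiv g) x)
      = poly f b * poly g b - poly f a * poly g a"
    using integral_poly_pderiv[OF assms, of "f * g"] by simp
  then show ?thesis by (simp add: integral_add)
qed

lemma integral_higher_pderiv_by_parts:
  fixes u g :: "real poly"
  assumes "a \<le> b"
    and "\<forall>i<m. poly ((pderiv ^^ i) u) a = 0 \<and> poly ((pderiv ^^ i) u) b = 0"
  shows "integral {a..b} (\<lambda>x. poly ((pderiv ^^ m) u) x * poly g x)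
    = (-1) ^ m * integral {a..b} (\<lambda>x. poly u x * poly ((pderiv ^^ m) g) x)"
  using assms(2)
proof (induction m arbitrary: g)
  case (Suc m)
  have "integral {a..b} (\<lambda>x. poly ((pderiv ^^ Suc m) u) x * poly g x)
      = - integral {a..b} (\<lambda>x. poly ((pderiv ^^ m) u) x * poly (pderiv g) x)"
    using integral_poly_by_parts[OF assms(1), of "(pderiv ^^ m) u" g] Suc.prems by simp
  also have "\<dots> = - ((-1) ^ m * integral {a..b} (\<lambda>x. poly u x * poly ((pderiv ^^ Suc m) g) x))"
    using Suc by (simp add: funpow_Suc_right del: funpow.simps)
  finally show ?case by simp
qed simp

lemma integral_poly_sum_smult:
  fixes p :: "'i \<Rightarrow> real poly"
  assumes "finite A"
  shows "integral {a..b} (\<lambda>x. poly (\<Sum>c\<in>A. Polynomial.smult (f c) (p c)) x * poly q x)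
    = (\<Sum>c\<in>A. f c * integral {a..b} (\<lambda>x. poly (p c) x * poly q x))"
  by (simp add: poly_sum sum_distrib_right mult.assoc, subst integral_sum[OF assms])
    (auto intro!: integrable_continuous_interval continuous_intros)

lemma integral_poly_diff_mult:
  "integral {a..b} (\<lambda>x. poly (p - q) x * poly \<phi> x :: real)
    = integral {a..b} (\<lambda>x. poly p x * poly \<phi> x) - integral {a..b} (\<lambda>x. poly q x * poly \<phi> x)"
  by (simp add: left_diff_distrib integral_diff)

lemma exists_higher_antiderivative:
  "\<exists>W. (pderiv ^^ m) W = (w :: real poly) \<and> (\<forall>j<m. poly ((pderiv ^^ j) W) c = 0)"
proof (induction m)
  case (Suc m)
  then obtain W where W: "(pderiv ^^ m) W = w" "\<forall>j<m. poly ((pderiv ^^ j) W) c = 0"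
    by blast
  define P0 where "P0 = (\<Sum>i\<le>degree W. monom (coeff W i / real (Suc i)) (Suc i))"
  have "pderiv P0 = (\<Sum>i\<le>degree W. monom (coeff W i) i)"
    unfolding P0_def higher_pderiv_sum[of 1, simplified] pderiv_monom by (simp del: of_nat_Suc)
  then have P0: "pderiv P0 = W"
    by (simp add: poly_as_sum_of_monoms)
  define P where "P = P0 - [:poly P0 c:]"
  have P: "pderiv P = W" "poly P c = 0"
    using P0 by (simp_all add: P_def pderiv_diff pderiv_pCons)
  have "(pderiv ^^ Suc j) P = (pderiv ^^ j) W" for j
    by (simp only: funpow_Suc_right o_apply P)
  then have "(pderiv ^^ Suc m) P = w \<and> (\<forall>j<Suc m. poly ((pderiv ^^ j) P) c = 0)"
    using P W by (auto simp: less_Suc_eq_0_disj)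
  then show ?case ..
qed simp

section \<open>Vanishing moments on consecutive cells\<close>

lemma higher_pderivs_vanish_at_right_endpoint:
  fixes W :: "real poly"
  assumes "\<alpha> \<le> \<beta>" and left: "\<forall>j<n. poly ((pderiv ^^ j) W) \<alpha> = 0"
    and moments: "\<forall>\<phi>. degree \<phi> < n \<longrightarrow>
      integral {\<alpha>..\<beta>} (\<lambda>x. poly ((pderiv ^^ n) W) x * poly \<phi> x) = 0"
  shows "\<forall>j<n. poly ((pderiv ^^ j) W) \<beta> = 0"
proof (intro allI impI)
  fix j assume "j < n"
  define D where "D i = poly ((pderiv ^^ (i + j)) W)" for i
  have D_deriv: "(D i has_vector_derivative D (Suc i) x) (at x within {\<alpha>..\<beta>})" for i x
    by (simp add: D_def has_real_derivative_iff_has_vector_derivative[symmetric]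
        has_field_derivative_at_within)
  \<comment> \<open>Taylor's formula for the \<open>j\<close>-th derivative; its remainder is a moment of the \<open>n\<close>-th derivative\<close>
  have "D 0 \<beta> = (\<Sum>i<n - j. ((\<beta> - \<alpha>) ^ i / fact i) *\<^sub>R D i \<alpha>)
      + integral {\<alpha>..\<beta>} (\<lambda>x. ((\<beta> - x) ^ (n - j - 1) / fact (n - j - 1)) *\<^sub>R D (n - j) x)"
    using Taylor_integral[of "n - j" D "D 0" \<alpha> \<beta>] D_deriv \<open>\<alpha> \<le> \<beta>\<close> \<open>j < n\<close> by simp
  moreover have "D i \<alpha> = 0" if "i < n - j" for i
    using left that by (simp add: D_def)
  moreover have "D (n - j) = poly ((pderiv ^^ n) W)"
    using \<open>j < n\<close> by (simp add: D_def)
  moreover have "integral {\<alpha>..\<beta>} (\<lambda>x. poly ((pderiv ^^ n) W) x * poly \<phi> x) = 0"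
    if "\<phi> = Polynomial.smult (1 / fact (n - j - 1)) ([:\<beta>, -1:] ^ (n - j - 1))" for \<phi>
  proof -
    have "degree \<phi> < n"
      using that \<open>j < n\<close> by (simp add: degree_power_eq)
    then show ?thesis using moments by blast
  qed
  ultimately show "poly ((pderiv ^^ j) W) \<beta> = 0"
    by (simp add: D_def mult.commute)
qed

lemma higher_pderivs_vanish_iff_order_ge:
  fixes p :: "'a :: field_char_0 poly"
  assumes "p \<noteq> 0"
  shows "(\<forall>j<n. poly ((pderiv ^^ j) p) c = 0) \<longleftrightarrow> n \<le> order c p"
  using assms
proof (induction n arbitrary: p)
  case (Suc n)
  show ?case
  proof (cases "poly p c = 0")
    case True
    have "pderiv p \<noteq> 0"
    proof
      assume "pderiv p = 0"
      then obtain d where "p = [:d:]" using pderiv_iszero by blast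
      with True Suc.prems show False by simp
    qed
    have "(\<forall>j<Suc n. poly ((pderiv ^^ j) p) c = 0) \<longleftrightarrow>
        (\<forall>j<n. poly ((pderiv ^^ j) (pderiv p)) c = 0)"
      using True by (simp add: All_less_Suc2 funpow_Suc_right del: funpow.simps)
    also have "\<dots> \<longleftrightarrow> n \<le> order c (pderiv p)"
      using Suc.IH[OF \<open>pderiv p \<noteq> 0\<close>] .
    also have "\<dots> \<longleftrightarrow> Suc n \<le> order c p"
      using order_pderiv[OF Suc.prems True] by simp
    finally show ?thesis .
  next
    case False
    then show ?thesis
      using order_root[of p c] by (auto simp: All_less_Suc2)
  qed
qed simp

lemma sum_count_le_size:
  assumes "finite S"
  shows "(\<Sum>c\<in>S. count M c) \<le> size M"
proof (induction M)
  case (add a M)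
  have "(\<Sum>c\<in>S. count (add_mset a M) c) = (\<Sum>c\<in>S. count M c) + (\<Sum>c\<in>S. if c = a then 1 else 0)"
    by (simp add: sum.distrib[symmetric]) (rule sum.cong, auto)
  also have "(\<Sum>c\<in>S. if c = a then 1 else 0) \<le> (1::nat)"
    using assms by (simp add: sum.delta)
  finally show ?case using add.IH by simp
qed simp

lemma card_mult_le_degree_if_order_ge:
  fixes W :: "'a :: idom poly"
  assumes "W \<noteq> 0" and "finite S" and "\<forall>c\<in>S. k \<le> order c W"
  shows "card S * k \<le> degree W"
proof -
  have "card S * k = (\<Sum>c\<in>S. k)" by simp
  also have "\<dots> \<le> (\<Sum>c\<in>S. count (proots W) c)"
    using assms by (intro sum_mono) simp
  also have "\<dots> \<le> size (proots W)"
    using \<open>finite S\<close> by (rule sum_count_le_size)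
  also have "\<dots> \<le> degree W" by (rule size_proots_le)
  finally show ?thesis .
qed

lemma poly_eq_0_if_moments_vanish_on_cells:
  fixes w :: "real poly" and x :: "nat \<Rightarrow> real"
  assumes "strict_mono x" and "degree w < m * n"
    and moments: "\<forall>i<m. \<forall>\<phi>. degree \<phi> < n \<longrightarrow>
      integral {x i..x (Suc i)} (\<lambda>t. poly w t * poly \<phi> t) = 0"
  shows "w = 0"
proof -
  obtain W where W: "(pderiv ^^ n) W = w" "\<forall>j<n. poly ((pderiv ^^ j) W) (x 0) = 0"
    using exists_higher_antiderivative by blast
  have vanish: "\<forall>j<n. poly ((pderiv ^^ j) W) (x i) = 0" if "i \<le> m" for i
    using that
  proof (induction i)
    case (Suc i)
    show ?case
    proof (rule higher_pderivs_vanish_at_right_endpoint)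
      show "x i \<le> x (Suc i)"
        using \<open>strict_mono x\<close> by (simp add: strict_mono_less_eq)
      show "\<forall>j<n. poly ((pderiv ^^ j) W) (x i) = 0"
        using Suc by simp
      show "\<forall>\<phi>. degree \<phi> < n \<longrightarrow>
          integral {x i..x (Suc i)} (\<lambda>t. poly ((pderiv ^^ n) W) t * poly \<phi> t) = 0"
        using moments W(1) Suc.prems by simp
    qed
  qed (use W(2) in auto)
  have "W = 0"
  proof (rule ccontr)
    assume "W \<noteq> 0"
    have "card (x ` {..m}) * n \<le> degree W"
      using vanish higher_pderivs_vanish_iff_order_ge[OF \<open>W \<noteq> 0\<close>]
      by (intro card_mult_le_degree_if_order_ge \<open>W \<noteq> 0\<close>) auto
    moreover have "card (x ` {..m}) = Suc m"
      using strict_mono_imp_inj_on[OF \<open>strict_mono x\<close>] by (simp add: card_image)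
    moreover have "degree w = degree W - n"
      using W(1) degree_higher_pderiv by metis
    ultimately show False
      using \<open>degree w < m * n\<close> by simp
  qed
  then show ?thesis using W(1) by simp
qed

lemma poly_eq_0_if_cell_moments_vanish:
  fixes w :: "real poly"
  assumes "h > 0" and "degree w \<le> 3 * N + 2"
    and "\<forall>j\<in>{0,1,2}. \<forall>\<phi>. degree \<phi> \<le> N \<longrightarrow>
      integral (cell a h j) (\<lambda>x. poly w x * poly \<phi> x) = 0"
  shows "w = 0"
proof (rule poly_eq_0_if_moments_vanish_on_cells)
  define x where "x i = a + (real i - 1) * h" for i
  show "strict_mono x"
    using \<open>h > 0\<close> by (intro strict_monoI_Suc) (simp add: x_def algebra_simps)
  show "degree w < 3 * Suc N"
    using assms(2) by simp
  have "cell a h i = {x i..x (Suc i)}" for i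
    by (simp add: cell_def x_def)
  moreover have "i \<in> {0,1,2}" if "i < 3" for i :: nat
    using that by auto
  ultimately show "\<forall>i<3. \<forall>\<phi>. degree \<phi> < Suc N \<longrightarrow>
      integral {x i..x (Suc i)} (\<lambda>t. poly w t * poly \<phi> t) = 0"
    using assms(3) by (metis less_Suc_eq_le)
qed

lemma poly_eq_0_if_moments_vanish_on_reference_cells:
  fixes w :: "real poly"
  assumes "degree w \<le> 3 * N + 2"
    and "\<And>\<phi>. degree \<phi> \<le> N \<Longrightarrow> integral {-3..-1} (\<lambda>x. poly w x * poly \<phi> x) = 0"
    and "\<And>\<phi>. degree \<phi> \<le> N \<Longrightarrow> integral {-1..1} (\<lambda>x. poly w x * poly \<phi> x) = 0"
    and "\<And>\<phi>. degree \<phi> \<le> N \<Longrightarrow> integral {1..3} (\<lambda>x. poly w x * poly \<phi> x) = 0"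
  shows "w = 0"
proof (rule poly_eq_0_if_cell_moments_vanish[of 2 w N "-1"])
  show "\<forall>j\<in>{0,1,2}. \<forall>\<phi>. degree \<phi> \<le> N \<longrightarrow>
      integral (cell (-1) 2 j) (\<lambda>x. poly w x * poly \<phi> x) = 0"
  proof (intro ballI allI impI)
    fix j :: nat and \<phi> :: "real poly"
    assume "j \<in> {0,1,2}" and \<phi>: "degree \<phi> \<le> N"
    then consider "cell (-1) 2 j = {-3..-1}" | "cell (-1) 2 j = {-1..1}" | "cell (-1) 2 j = {1..3}"
      by (auto simp: cell_def)
    then show "integral (cell (-1) 2 j) (\<lambda>x. poly w x * poly \<phi> x) = 0"
      by cases (simp_all only: assms(2-4)[OF \<phi>])
  qed
qed (use assms(1) in simp_all)

section \<open>Linear algebra\<close>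

lemma poly_in_span_of_triangular_family:
  fixes Q :: "nat \<Rightarrow> 'a :: field poly"
  assumes Q: "\<forall>k\<le>n. degree (Q k) = k \<and> Q k \<noteq> 0" and "degree p \<le> n"
  shows "\<exists>f. p = (\<Sum>k\<le>n. Polynomial.smult (f k) (Q k))"
proof -
  have "\<forall>p. (\<forall>k\<ge>i. coeff p k = 0) \<longrightarrow> (\<exists>f. p = (\<Sum>k<i. Polynomial.smult (f k) (Q k)))"
    if "i \<le> Suc n" for i
    using that
  proof (induction i)
    case 0
    show ?case by (auto intro: poly_eqI)
  next
    case (Suc i)
    show ?case
    proof (intro allI impI)
      fix p :: "'a poly"
      assume p: "\<forall>k\<ge>Suc i. coeff p k = 0"
      define c where "c = coeff p i / lead_coeff (Q i)"
      have Qi: "degree (Q i) = i" "coeff (Q i) i \<noteq> 0"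
        using Q Suc.prems by (metis Suc_le_mono leading_coeff_0_iff)+
      have "\<forall>k\<ge>i. coeff (p - Polynomial.smult c (Q i)) k = 0"
      proof (intro allI impI)
        fix k assume "i \<le> k"
        then consider "k = i" | "k > i" by linarith
        then show "coeff (p - Polynomial.smult c (Q i)) k = 0"
          by cases (use p Qi in \<open>auto simp: c_def coeff_eq_0\<close>)
      qed
      moreover have "i \<le> Suc n" using Suc.prems by simp
      ultimately obtain f where f: "p - Polynomial.smult c (Q i) = (\<Sum>k<i. Polynomial.smult (f k) (Q k))"
        using Suc.IH by blast
      have "(\<Sum>k<i. Polynomial.smult ((f(i := c)) k) (Q k)) = (\<Sum>k<i. Polynomial.smult (f k) (Q k))"
        by (rule sum.cong) simp_all
      then have "p = (\<Sum>k<Suc i. Polynomial.smult ((f(i := c)) k) (Q k))"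
        using f by (simp add: diff_eq_eq)
      then show "\<exists>f. p = (\<Sum>k<Suc i. Polynomial.smult (f k) (Q k))" by blast
    qed
  qed
  moreover have "\<forall>k\<ge>Suc n. coeff p k = 0"
    using \<open>degree p \<le> n\<close> by (simp add: coeff_eq_0)
  ultimately show ?thesis
    unfolding lessThan_Suc_atMost[symmetric] by blast
qed

lemma integral_poly_mult_eq_0_if_triangular:
  fixes w :: "real poly"
  assumes "\<forall>k\<le>N. degree (Q k) = k \<and> Q k \<noteq> 0"
    and "\<forall>k\<le>N. integral {a..b} (\<lambda>x. poly w x * poly (Q k) x) = 0" and "degree \<phi> \<le> N"
  shows "integral {a..b} (\<lambda>x. poly w x * poly \<phi> x) = 0"
proof -
  obtain f where "\<phi> = (\<Sum>k\<le>N. Polynomial.smult (f k) (Q k))"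
    using poly_in_span_of_triangular_family[OF assms(1,3)] by blast
  then have "integral {a..b} (\<lambda>x. poly \<phi> x * poly w x)
      = (\<Sum>k\<le>N. f k * integral {a..b} (\<lambda>x. poly (Q k) x * poly w x))"
    by (simp only: integral_poly_sum_smult[OF finite_atMost])
  also have "\<dots> = 0"
    using assms(2) by (simp add: mult.commute)
  finally show ?thesis by (simp add: mult.commute)
qed

lemma integral_poly_mult_eq_0_if_monomial_moments:
  fixes w :: "real poly"
  assumes "\<forall>k\<le>N. integral {a..b} (\<lambda>x. poly w x * x ^ k) = 0" and "degree \<phi> \<le> N"
  shows "integral {a..b} (\<lambda>x. poly w x * poly \<phi> x) = 0"
proof (rule integral_poly_mult_eq_0_if_triangular[OF _ _ assms(2)])
  show "\<forall>k\<le>N. degree (monom (1::real) k) = k \<and> monom (1::real) k \<noteq> 0"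
    by (simp add: degree_monom_eq)
  show "\<forall>k\<le>N. integral {a..b} (\<lambda>x. poly w x * poly (monom 1 k) x) = 0"
    using assms(1) by (simp add: poly_monom)
qed

lemma sum_smult_eq_0_imp_coeffs_eq_0:
  fixes Q :: "nat \<Rightarrow> 'a :: field poly"
  assumes "strict_mono (\<lambda>k. degree (Q k))" and "\<forall>k<n. Q k \<noteq> 0"
    and "(\<Sum>k<n. Polynomial.smult (f k) (Q k)) = 0"
  shows "\<forall>k<n. f k = 0"
  using assms(2,3)
proof (induction n)
  case (Suc n)
  have "coeff (Polynomial.smult (f k) (Q k)) (degree (Q n)) = 0" if "k < n" for k
    using strict_monoD[OF assms(1) that] by (simp add: coeff_eq_0)
  then have "coeff (\<Sum>k<Suc n. Polynomial.smult (f k) (Q k)) (degree (Q n)) = f n * lead_coeff (Q n)"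
    by (simp add: coeff_sum sum.neutral)
  then have "f n * lead_coeff (Q n) = 0"
    unfolding Suc.prems(2) by simp
  then have "f n = 0"
    using Suc.prems(1) by simp
  then show ?case
    using Suc by (simp add: less_Suc_eq)
qed simp

lemma mat_inverse_if_mult_vec_inj:
  fixes A :: "'a :: field mat"
  assumes A: "A \<in> carrier_mat n n"
    and inj: "\<And>v. v \<in> carrier_vec n \<Longrightarrow> A *\<^sub>v v = 0\<^sub>v n \<Longrightarrow> v = 0\<^sub>v n"
  obtains B where "B \<in> carrier_mat n n" "B * A = 1\<^sub>m n" "A * B = 1\<^sub>m n"
proof -
  have "det A \<noteq> 0"
    using det_0_iff_vec_prod_zero_field[OF A] inj by blast
  then have "A \<in> Units (ring_mat TYPE('a) n ())"
    by (rule det_non_zero_imp_unit[OF A])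
  then show ?thesis
    using that unfolding Units_def ring_mat_def by auto
qed

lemma mult_vec_surj_if_inj:
  fixes A :: "'a :: field mat"
  assumes A: "A \<in> carrier_mat n n"
    and inj: "\<And>v. v \<in> carrier_vec n \<Longrightarrow> A *\<^sub>v v = 0\<^sub>v n \<Longrightarrow> v = 0\<^sub>v n"
    and "b \<in> carrier_vec n"
  shows "\<exists>v\<in>carrier_vec n. A *\<^sub>v v = b"
proof -
  obtain B where B: "B \<in> carrier_mat n n" "A * B = 1\<^sub>m n"
    using mat_inverse_if_mult_vec_inj[OF A inj] by blast
  have "A *\<^sub>v (B *\<^sub>v b) = (A * B) *\<^sub>v b"
    using assoc_mult_mat_vec[OF A B(1) \<open>b \<in> carrier_vec n\<close>] by simp
  then show ?thesis
    using B \<open>b \<in> carrier_vec n\<close> by (metis mult_mat_vec_carrier one_mult_mat_vec)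
qed

lemma exists_poly_with_prescribed_functionals:
  fixes L :: "nat \<Rightarrow> real poly \<Rightarrow> real"
  assumes L_add: "\<And>r p q. L r (p + q) = L r p + L r q"
    and L_smult: "\<And>r c p. L r (Polynomial.smult c p) = c * L r p"
    and inj: "\<And>p. degree p \<le> m \<Longrightarrow> \<forall>r\<le>m. L r p = 0 \<Longrightarrow> p = 0"
  shows "\<exists>p. degree p \<le> m \<and> (\<forall>r\<le>m. L r p = y r)"
proof -
  let ?n = "Suc m"
  define M where "M = mat ?n ?n (\<lambda>(r, c). L r (monom 1 c))"
  define P where "P v = (\<Sum>c<?n. monom (v $ c) c)" for v :: "real vec"
  have M: "M \<in> carrier_mat ?n ?n"
    by (simp add: M_def)
  have L_sum: "L r (\<Sum>c\<in>A. f c) = (\<Sum>c\<in>A. L r (f c))" if "finite A" for r f and A :: "nat set"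
    using that
  proof (induction A rule: finite_induct)
    case empty
    show ?case using L_smult[of r 0 0] by simp
  qed (simp add: L_add)
  have M_P: "(M *\<^sub>v v) $ r = L r (P v)" if "v \<in> carrier_vec ?n" "r < ?n" for v r
  proof -
    have "(M *\<^sub>v v) $ r = (\<Sum>c<?n. v $ c * L r (monom 1 c))"
      using that by (simp add: M_def scalar_prod_def lessThan_atLeast0 mult.commute)
    also have "\<dots> = (\<Sum>c<?n. L r (monom (v $ c) c))"
      by (rule sum.cong) (simp_all add: L_smult[of r _ "monom 1 _", symmetric] smult_monom)
    also have "\<dots> = L r (P v)"
      unfolding P_def by (rule L_sum[symmetric]) simp
    finally show ?thesis .
  qed
  have degree_P: "degree (P v) \<le> m" for v
    unfolding P_def by (rule degree_sum_le) (auto intro: order.trans[OF degree_monom_le])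
  have coeff_P: "coeff (P v) c = v $ c" if "c < ?n" for v c
    using that by (simp add: P_def coeff_sum)
  have "v = 0\<^sub>v ?n" if v: "v \<in> carrier_vec ?n" and "M *\<^sub>v v = 0\<^sub>v ?n" for v
  proof -
    have "P v = 0"
      using M_P[OF v] \<open>M *\<^sub>v v = 0\<^sub>v ?n\<close> degree_P by (intro inj) (auto simp: less_Suc_eq_le)
    then show ?thesis
      using v coeff_P[of _ v] by (intro eq_vecI) auto
  qed
  then obtain v where v: "v \<in> carrier_vec ?n" "M *\<^sub>v v = vec ?n y"
    using mult_vec_surj_if_inj[OF M] by (metis vec_carrier)
  then have "\<forall>r\<le>m. L r (P v) = y r"
    using M_P[OF v(1)] by (auto simp flip: less_Suc_eq_le)
  then show ?thesis
    using degree_P by blast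
qed

section \<open>Legendre polynomials\<close>

lemma degree_legendre [simp]: "degree (legendre n) = n"
  by (simp add: legendre_def degree_higher_pderiv degree_power_eq)

lemma coeff_legendre_self: "coeff (legendre n) n \<noteq> 0"
proof -
  have "coeff ((pderiv ^^ n) ([:-1, 0, 1:] ^ n)) n
      = pochhammer (real (Suc n)) n * lead_coeff ([:-1, 0, 1:] ^ n :: real poly)"
    by (simp add: coeff_higher_pderiv degree_power_eq mult_2)
  moreover have "pochhammer (real (Suc n)) n > 0"
    by (rule pochhammer_pos) simp
  ultimately show ?thesis
    by (simp add: legendre_def lead_coeff_power)
qed

lemma legendre_ne_0: "legendre n \<noteq> 0"
  using coeff_legendre_self[of n] by (metis coeff_0)

lemma legendre_shift_triangular:
  "degree (legendre k \<circ>\<^sub>p [:c, 1:]) = k \<and> legendre k \<circ>\<^sub>p [:c, 1:] \<noteq> 0"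
  by (simp add: degree_pcompose pcompose_eq_0_iff legendre_ne_0)

lemma higher_pderiv_pcompose_uminus:
  "(pderiv ^^ n) (p \<circ>\<^sub>p [:0, -1:]) = Polynomial.smult ((-1) ^ n) ((pderiv ^^ n) p \<circ>\<^sub>p [:0, -1:])"
proof (induction n arbitrary: p)
  case (Suc n)
  have "(pderiv ^^ Suc n) (p \<circ>\<^sub>p [:0, -1:]) = (pderiv ^^ n) (pderiv (p \<circ>\<^sub>p [:0, -1:]))"
    by (simp only: funpow_Suc_right o_apply)
  also have "pderiv (p \<circ>\<^sub>p [:0, -1:]) = Polynomial.smult (-1) (pderiv p \<circ>\<^sub>p [:0, -1:])"
    by (simp add: pderiv_pcompose pderiv_pCons)
  also have "(pderiv ^^ n) (Polynomial.smult (-1) (pderiv p \<circ>\<^sub>p [:0, -1:]))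
      = Polynomial.smult (-1) (Polynomial.smult ((-1) ^ n) ((pderiv ^^ n) (pderiv p) \<circ>\<^sub>p [:0, -1:]))"
    by (simp only: higher_pderiv_smult Suc.IH)
  also have "(pderiv ^^ n) (pderiv p) = (pderiv ^^ Suc n) p"
    by (simp only: funpow_Suc_right o_apply)
  finally show ?case by simp
qed simp

lemma poly_legendre_minus: "poly (legendre n) (- x) = (-1) ^ n * poly (legendre n) x"
proof -
  let ?u = "[:-1, 0, 1:] ^ n :: real poly"
  have "?u \<circ>\<^sub>p [:0, -1:] = ?u"
    by (simp add: poly_eq_poly_eq_iff[symmetric] poly_pcompose fun_eq_iff)
  then have "(pderiv ^^ n) ?u = Polynomial.smult ((-1) ^ n) ((pderiv ^^ n) ?u \<circ>\<^sub>p [:0, -1:])"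
    using higher_pderiv_pcompose_uminus[of n ?u] by simp
  from arg_cong[OF this, of "\<lambda>p. poly p (- x)"]
  have "poly ((pderiv ^^ n) ?u) (- x) = (-1) ^ n * poly ((pderiv ^^ n) ?u) x"
    by (simp add: poly_pcompose)
  then show ?thesis
    by (simp add: legendre_def)
qed

lemma legendre_orthogonal:
  assumes "degree g < n"
  shows "integral {-1..1} (\<lambda>x. poly (legendre n) x * poly g x) = 0"
proof -
  let ?u = "[:-1, 0, 1:] ^ n :: real poly"
  have u_factor: "?u = [:-1, 1:] ^ n * [:- (-1), 1:] ^ n"
    by (simp add: power_mult_distrib[symmetric])
  have "[:-1, 1:] ^ n dvd ?u" "[:- (-1), 1:] ^ n dvd ?u"
    by (simp_all only: u_factor dvd_triv_left dvd_triv_right)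
  then have "n \<le> order 1 ?u" "n \<le> order (-1) ?u"
    using order_divides[of 1 n ?u] order_divides[of "-1" n ?u] by simp_all
  then have boundary: "\<forall>i<n. poly ((pderiv ^^ i) ?u) (-1) = 0 \<and> poly ((pderiv ^^ i) ?u) 1 = 0"
    using higher_pderivs_vanish_iff_order_ge[of ?u n] by auto
  have "(pderiv ^^ n) g = 0"
    using assms by (intro poly_eqI) (simp add: coeff_higher_pderiv coeff_eq_0)
  then have "integral {-1..1} (\<lambda>x. poly ((pderiv ^^ n) ?u) x * poly g x) = 0"
    using integral_higher_pderiv_by_parts[of "-1" 1 n ?u g] boundary by simp
  then show ?thesis
    by (simp add: legendre_def mult.assoc)
qed

lemma integral_legendre_shift_right:
  "integral {1..3} (\<lambda>x. poly (legendre l) x * poly (legendre k \<circ>\<^sub>p [:-2, 1:]) x) = leg_a k l"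
  using integral_shift_real_ivl[of 1 2 3 "\<lambda>x. poly (legendre l) x * poly (legendre k \<circ>\<^sub>p [:-2, 1:]) x"]
  by (simp add: leg_a_def poly_pcompose mult.commute add.commute)

lemma integral_legendre_shift_left:
  "integral {-3..-1} (\<lambda>x. poly (legendre l) x * poly (legendre k \<circ>\<^sub>p [:2, 1:]) x) = leg_b k l"
proof -
  have "integral {-3..-1} (\<lambda>x. poly (legendre l) x * poly (legendre k \<circ>\<^sub>p [:2, 1:]) x)
      = integral {1..3} (\<lambda>y. poly (legendre l) (- y) * poly (legendre k) (2 - y))"
    using Henstock_Kurzweil_Integration.integral_reflect_real[of 3 1 "\<lambda>y. poly (legendre l) (- y) * poly (legendre k) (2 - y)"]
    by (simp add: poly_pcompose)
  also have "\<dots> = integral {-1..1} (\<lambda>s. poly (legendre l) (- (s + 2)) * poly (legendre k) (- s))"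
    using integral_shift_real_ivl[of 1 2 3 "\<lambda>y. poly (legendre l) (- y) * poly (legendre k) (2 - y)"]
    by simp
  also have "\<dots> = (-1) ^ (k + l) * leg_a k l"
    using poly_legendre_minus[of l "_ + 2"]
    by (simp add: poly_legendre_minus leg_a_def power_add mult_ac flip: integral_mult_right)
  finally show ?thesis
    by (simp add: leg_b_def)
qed

lemma legendre_combination_eq_0:
  fixes \<beta> :: "nat \<Rightarrow> real" and l :: "nat \<Rightarrow> nat"
  assumes "\<forall>c<n. N < l c \<and> l c \<le> 3 * N + 2"
    and a: "\<forall>k\<le>N. (\<Sum>c<n. \<beta> c * leg_a k (l c)) = 0"
    and b: "\<forall>k\<le>N. (\<Sum>c<n. \<beta> c * leg_b k (l c)) = 0"
  shows "(\<Sum>c<n. Polynomial.smult (\<beta> c) (legendre (l c))) = 0"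
proof -
  define w where "w = (\<Sum>c<n. Polynomial.smult (\<beta> c) (legendre (l c)))"
  have left: "integral {-3..-1} (\<lambda>x. poly w x * poly \<phi> x) = 0" if "degree \<phi> \<le> N" for \<phi>
  proof (rule integral_poly_mult_eq_0_if_triangular[OF _ _ that])
    show "\<forall>k\<le>N. degree (legendre k \<circ>\<^sub>p [:2, 1:]) = k \<and> legendre k \<circ>\<^sub>p [:2, 1:] \<noteq> 0"
      using legendre_shift_triangular by blast
    show "\<forall>k\<le>N. integral {-3..-1} (\<lambda>x. poly w x * poly (legendre k \<circ>\<^sub>p [:2, 1:]) x) = 0"
      unfolding w_def integral_poly_sum_smult[OF finite_lessThan] integral_legendre_shift_left
      using b .
  qed
  have middle: "integral {-1..1} (\<lambda>x. poly w x * poly \<phi> x) = 0" if "degree \<phi> \<le> N" for \<phi>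
    unfolding w_def integral_poly_sum_smult[OF finite_lessThan]
  proof (intro sum.neutral ballI)
    fix c assume "c \<in> {..<n}"
    then have "degree \<phi> < l c"
      using that assms(1) by fastforce
    then show "\<beta> c * integral {-1..1} (\<lambda>x. poly (legendre (l c)) x * poly \<phi> x) = 0"
      by (simp add: legendre_orthogonal)
  qed
  have right: "integral {1..3} (\<lambda>x. poly w x * poly \<phi> x) = 0" if "degree \<phi> \<le> N" for \<phi>
  proof (rule integral_poly_mult_eq_0_if_triangular[OF _ _ that])
    show "\<forall>k\<le>N. degree (legendre k \<circ>\<^sub>p [:-2, 1:]) = k \<and> legendre k \<circ>\<^sub>p [:-2, 1:] \<noteq> 0"
      using legendre_shift_triangular by blast
    show "\<forall>k\<le>N. integral {1..3} (\<lambda>x. poly w x * poly (legendre k \<circ>\<^sub>p [:-2, 1:]) x) = 0"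
      unfolding w_def integral_poly_sum_smult[OF finite_lessThan] integral_legendre_shift_right
      using a .
  qed
  have "degree w \<le> 3 * N + 2"
    unfolding w_def
  proof (rule degree_sum_le)
    fix c assume "c \<in> {..<n}"
    then show "degree (Polynomial.smult (\<beta> c) (legendre (l c))) \<le> 3 * N + 2"
      using degree_smult_le[of "\<beta> c" "legendre (l c)"] assms(1) by fastforce
  qed simp
  then have "w = 0"
    using left middle right by (rule poly_eq_0_if_moments_vanish_on_reference_cells)
  then show ?thesis
    unfolding w_def .
qed

lemma recon_matrix_mult_vec:
  assumes "\<beta> \<in> carrier_vec (2 * N + 2)" and "k \<le> N"
  shows "(recon_matrix N *\<^sub>v \<beta>) $ k = (\<Sum>c<2 * N + 2. \<beta> $ c * leg_a k (N + 1 + c))"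
    and "(recon_matrix N *\<^sub>v \<beta>) $ (N + 1 + k) = (\<Sum>c<2 * N + 2. \<beta> $ c * leg_c k (N + 1 + c))"
  using assms
  by (auto simp: recon_matrix_def scalar_prod_def lessThan_atLeast0 mult.commute intro!: sum.cong)

lemma recon_matrix_mult_vec_eq_0_imp:
  assumes \<beta>: "\<beta> \<in> carrier_vec (2 * N + 2)" and "recon_matrix N *\<^sub>v \<beta> = 0\<^sub>v (2 * N + 2)"
  shows "\<beta> = 0\<^sub>v (2 * N + 2)"
proof -
  let ?n = "2 * N + 2"
  have row_a: "(\<Sum>c<?n. \<beta> $ c * leg_a k (N + 1 + c)) = 0" if "k \<le> N" for k
    using recon_matrix_mult_vec(1)[OF \<beta> that] assms(2) that by simp
  have row_c: "(\<Sum>c<?n. \<beta> $ c * leg_c k (N + 1 + c)) = 0" if "k \<le> N" for k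
    using recon_matrix_mult_vec(2)[OF \<beta> that] assms(2) that by simp
  have row_b: "(\<Sum>c<?n. \<beta> $ c * leg_b k (N + 1 + c)) = 0" if "k \<le> N" for k
  proof -
    have "(\<Sum>c<?n. \<beta> $ c * leg_b k (N + 1 + c))
        = (\<Sum>c<?n. 2 * (\<beta> $ c * leg_c k (N + 1 + c)) - \<beta> $ c * leg_a k (N + 1 + c))"
      by (rule sum.cong) (simp_all add: leg_c_def algebra_simps)
    also have "\<dots> = 2 * (\<Sum>c<?n. \<beta> $ c * leg_c k (N + 1 + c))
        - (\<Sum>c<?n. \<beta> $ c * leg_a k (N + 1 + c))"
      by (simp add: sum_subtractf sum_distrib_left)
    also have "\<dots> = 0"
      by (simp only: row_a[OF that] row_c[OF that] mult_zero_right diff_zero)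
    finally show ?thesis .
  qed
  have "\<forall>c<?n. N < N + 1 + c \<and> N + 1 + c \<le> 3 * N + 2"
    by auto
  then have "(\<Sum>c<?n. Polynomial.smult (\<beta> $ c) (legendre (N + 1 + c))) = 0"
    using legendre_combination_eq_0[of ?n N "\<lambda>c. N + 1 + c" "\<lambda>c. \<beta> $ c"] row_a row_b by blast
  moreover have "strict_mono (\<lambda>c. degree (legendre (N + 1 + c)))"
    by (simp add: strict_mono_def)
  ultimately have "\<forall>c<?n. \<beta> $ c = 0"
    using sum_smult_eq_0_imp_coeffs_eq_0[of "\<lambda>c. legendre (N + 1 + c)" ?n "\<lambda>c. \<beta> $ c"]
    using legendre_ne_0 by blast
  then show ?thesis
    using \<beta> by (intro eq_vecI) auto
qed

lemma recon_matrix_invertible: "invertible_mat (recon_matrix N)"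
proof -
  have B: "recon_matrix N \<in> carrier_mat (2 * N + 2) (2 * N + 2)"
    by (simp add: recon_matrix_def)
  obtain B' where "B' \<in> carrier_mat (2 * N + 2) (2 * N + 2)"
      "B' * recon_matrix N = 1\<^sub>m (2 * N + 2)" "recon_matrix N * B' = 1\<^sub>m (2 * N + 2)"
    using mat_inverse_if_mult_vec_inj[OF B recon_matrix_mult_vec_eq_0_imp] by blast
  then show ?thesis
    using B by (auto simp: invertible_mat_def inverts_mat_def square_mat.simps)
qed

definition is_reconstruction :: "nat \<Rightarrow> real \<Rightarrow> real \<Rightarrow> (nat \<Rightarrow> real poly) \<Rightarrow> real poly \<Rightarrow> bool" where
  "is_reconstruction N a h v w \<longleftrightarrow> degree w \<le> 3 * N + 2 \<and> (\<forall>\<phi>. degree \<phi> \<le> N \<longrightarrow> (\<forall>j\<in>{0,1,2}.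
    integral (cell a h j) (\<lambda>x. poly w x * poly \<phi> x) = integral (cell a h j) (\<lambda>x. poly (v j) x * poly \<phi> x)))"

lemma reconstruction_exists:
  fixes v :: "nat \<Rightarrow> real poly"
  assumes "h > 0"
  shows "\<exists>w. is_reconstruction N a h v w"
proof -
  define L where
    "L r p = integral (cell a h (r div Suc N)) (\<lambda>x. poly p x * x ^ (r mod Suc N))" for r p
  have index: "(j * Suc N + k) div Suc N = j" "(j * Suc N + k) mod Suc N = k" "j * Suc N + k \<le> 3 * N + 2"
    if "j \<in> {0,1,2}" "k \<le> N" for j k :: nat
  proof -
    have "k < Suc N" using that(2) by simp
    then show "(j * Suc N + k) div Suc N = j" "(j * Suc N + k) mod Suc N = k"
      by (simp_all del: mult_Suc_right)
    show "j * Suc N + k \<le> 3 * N + 2"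
      using that by auto
  qed
  have moments: "integral (cell a h j) (\<lambda>x. poly p x * poly \<phi> x) = 0"
    if "j \<in> {0,1,2}" "degree \<phi> \<le> N" "\<forall>k\<le>N. L (j * Suc N + k) p = 0" for j p \<phi>
    unfolding cell_def
  proof (rule integral_poly_mult_eq_0_if_monomial_moments[OF _ that(2)], intro allI impI)
    fix k assume "k \<le> N"
    then have "L (j * Suc N + k) p = 0"
      using that(3) by blast
    then show "integral {a + (real j - 1) * h..a + real j * h} (\<lambda>x. poly p x * x ^ k) = 0"
      by (simp only: L_def cell_def index(1,2)[OF that(1) \<open>k \<le> N\<close>])
  qed
  obtain w where w: "degree w \<le> 3 * N + 2" "\<forall>r\<le>3 * N + 2. L r w = L r (v (r div Suc N))"
  proof (rule exE[OF exists_poly_with_prescribed_functionals[where y = "\<lambda>r. L r (v (r div Suc N))"]])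
    show "L r (p + q) = L r p + L r q" for r p q
      by (simp add: L_def cell_def distrib_right integral_add integrable_continuous_interval
          continuous_intros)
    show "L r (Polynomial.smult c p) = c * L r p" for r c p
      by (simp add: L_def mult.assoc)
    show "p = 0" if "degree p \<le> 3 * N + 2" "\<forall>r\<le>3 * N + 2. L r p = 0" for p
      using that index by (intro poly_eq_0_if_cell_moments_vanish[OF assms]) (auto intro!: moments)
  qed blast
  have L_diff: "L r (w - v j) = L r w - L r (v j)" for r j
    by (simp add: L_def cell_def left_diff_distrib integral_diff integrable_continuous_interval
        continuous_intros)
  have "integral (cell a h j) (\<lambda>x. poly (w - v j) x * poly \<phi> x) = 0"
    if "j \<in> {0,1,2}" "degree \<phi> \<le> N" for j \<phi>
  proof (rule moments[OF that], intro allI impI)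
    fix k assume "k \<le> N"
    have "L (j * Suc N + k) w = L (j * Suc N + k) (v ((j * Suc N + k) div Suc N))"
      using w(2) index(3)[OF that(1) \<open>k \<le> N\<close>] by blast
    then show "L (j * Suc N + k) (w - v j) = 0"
      unfolding L_diff index(1)[OF that(1) \<open>k \<le> N\<close>] by simp
  qed
  then have "integral (cell a h j) (\<lambda>x. poly w x * poly \<phi> x)
      = integral (cell a h j) (\<lambda>x. poly (v j) x * poly \<phi> x)"
    if "j \<in> {0,1,2}" "degree \<phi> \<le> N" for j \<phi>
    using that unfolding cell_def integral_poly_diff_mult by fastforce
  then show ?thesis
    using w(1) unfolding is_reconstruction_def by blast
qed

lemma reconstruction_unique:
  assumes "h > 0" and "is_reconstruction N a h v w1" and "is_reconstruction N a h v w2"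
  shows "w1 = w2"
proof -
  have "w1 - w2 = 0"
  proof (rule poly_eq_0_if_cell_moments_vanish[OF \<open>h > 0\<close>])
    show "degree (w1 - w2) \<le> 3 * N + 2"
      using assms(2,3) by (simp add: is_reconstruction_def degree_diff_le)
    show "\<forall>j\<in>{0,1,2}. \<forall>\<phi>. degree \<phi> \<le> N \<longrightarrow>
        integral (cell a h j) (\<lambda>x. poly (w1 - w2) x * poly \<phi> x) = 0"
    proof (intro ballI allI impI)
      fix j :: nat and \<phi> :: "real poly"
      assume "j \<in> {0,1,2}" and "degree \<phi> \<le> N"
      then have "integral (cell a h j) (\<lambda>x. poly w1 x * poly \<phi> x)
          = integral (cell a h j) (\<lambda>x. poly w2 x * poly \<phi> x)"
        using assms(2,3) unfolding is_reconstruction_def by metis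
      then show "integral (cell a h j) (\<lambda>x. poly (w1 - w2) x * poly \<phi> x) = 0"
        unfolding cell_def integral_poly_diff_mult by simp
    qed
  qed
  then show ?thesis by simp
qed

theorem mainTheorem1:
  fixes N :: nat and h a :: real and v :: "nat \<Rightarrow> real poly"
  assumes "h > 0"
    and "\<forall>j\<in>{0,1,2}. degree (v j) \<le> N"
  shows "invertible_mat (recon_matrix N) \<and>
    (\<exists>!w :: real poly. degree w \<le> 3 * N + 2 \<and>
       (\<forall>\<phi> :: real poly. degree \<phi> \<le> N \<longrightarrow>
          (\<forall>j\<in>{0,1,2}.
             integral (cell a h j) (\<lambda>x. poly w x * poly \<phi> x)
           = integral (cell a h j) (\<lambda>x. poly (v j) x * poly \<phi> x))))"
proof -
  have "\<exists>!w. is_reconstruction N a h v w"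
    using reconstruction_exists[OF \<open>h > 0\<close>] reconstruction_unique[OF \<open>h > 0\<close>] by blast
  then show ?thesis
    using recon_matrix_invertible unfolding is_reconstruction_def by blast
qed

end
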